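(* Let $X$ be a locale with frame presentation $\mathcal{O}X=\langle G\mid R\rangle$ and let $\overline{q}\colon\mathcal{O}(\Sigma^G)\twoheadrightarrow\mathcal{O}X$ be the quotient frame homomorphism. Equip $\mathcal{O}(\Sigma^G)$ with its Scott topology. Then the quotient topology on the set $\mathcal{O}X$ induced by the surjection $\overline{q}$ is exactly the Scott topology on $\mathcal{O}X$; that is, a subset $U\subseteq\mathcal{O}X$ is Scott-open if and only if $\overline{q}^{-1}(U)$ is Scott-open in $\mathcal{O}(\Sigma^G)$.
   Context: A frame is a complete lattice in which finite meets distribute over arbitrary joins. For a set $G$, $\mathcal{O}(\Sigma^G)$ denotes the free frame on $G$. A presentation $\mathcal{O}X=\langle G\mid R\rangle$ means $\mathcal{O}X$ is the quotient of the free frame on $G$ by the frame congruence generated by $R$; $\overline{q}$ is the corresponding surjective frame homomorphism. For a poset $L$ with directed joins, a subset $V\subseteq L$ is Scott-open if it is upward closed and whenever the join of a directed set $D$ lies in $V$, some $d\in D$ lies in $V$ (a set is directed if every finite subset has an upper bound in it). *)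

theory Defs
  imports Main
begin

definition directed_on :: "'a set \<Rightarrow> ('a \<Rightarrow> 'a \<Rightarrow> bool) \<Rightarrow> 'a set \<Rightarrow> bool" where
  "directed_on C le D \<longleftrightarrow> D \<subseteq> C \<and>
     (\<forall>F. finite F \<and> F \<subseteq> D \<longrightarrow> (\<exists>d\<in>D. \<forall>x\<in>F. le x d))"

definition is_lub_on :: "'a set \<Rightarrow> ('a \<Rightarrow> 'a \<Rightarrow> bool) \<Rightarrow> 'a set \<Rightarrow> 'a \<Rightarrow> bool" where
  "is_lub_on C le D s \<longleftrightarrow> s \<in> C \<and> (\<forall>x\<in>D. le x s) \<and>
     (\<forall>u\<in>C. (\<forall>x\<in>D. le x u) \<longrightarrow> le s u)"

definition scott_open_on :: "'a set \<Rightarrow> ('a \<Rightarrow> 'a \<Rightarrow> bool) \<Rightarrow> 'a set \<Rightarrow> bool" where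
  "scott_open_on C le V \<longleftrightarrow> V \<subseteq> C \<and>
     (\<forall>x\<in>V. \<forall>y\<in>C. le x y \<longrightarrow> y \<in> V) \<and>
     (\<forall>D s. directed_on C le D \<and> is_lub_on C le D s \<and> s \<in> V \<longrightarrow> (\<exists>d\<in>D. d \<in> V))"

definition is_frame :: "'a::complete_lattice itself \<Rightarrow> bool" where
  "is_frame _ \<longleftrightarrow> (\<forall>(a::'a) S. inf a (Sup S) = Sup ((\<lambda>s. inf a s) ` S))"

text \<open>The free frame O(Sigma^G) on G, realised concretely as the up-closed
  families of finite subsets of G, ordered by inclusion (this is the frame of
  down-sets of the free meet-semilattice Fin(G) ordered by reverse inclusion).
  Joins are unions, finite meets are intersections, the generator g is
  {F. g \<in> F}.\<close>

definition free_frame :: "'g set \<Rightarrow> 'g set set set" where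
  "free_frame G = {U. U \<subseteq> {F. finite F \<and> F \<subseteq> G} \<and>
      (\<forall>F\<in>U. \<forall>F'. finite F' \<and> F \<subseteq> F' \<and> F' \<subseteq> G \<longrightarrow> F' \<in> U)}"

definition free_frame_top :: "'g set \<Rightarrow> 'g set set" where
  "free_frame_top G = {F. finite F \<and> F \<subseteq> G}"

definition free_frame_gen :: "'g \<Rightarrow> 'g set set" where
  "free_frame_gen g = {F. finite F \<and> g \<in> F}"

definition free_frame_hom :: "'g set \<Rightarrow> ('g set set \<Rightarrow> 'a::complete_lattice) \<Rightarrow> bool" where
  "free_frame_hom G q \<longleftrightarrow>
     (\<forall>S. S \<subseteq> free_frame G \<longrightarrow> q (\<Union>S) = Sup (q ` S)) \<and>
     (\<forall>a\<in>free_frame G. \<forall>b\<in>free_frame G. q (a \<inter> b) = inf (q a) (q b)) \<and>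
     q (free_frame_top G) = top"

definition frame_congruence :: "'g set \<Rightarrow> ('g set set \<times> 'g set set) set \<Rightarrow> bool" where
  "frame_congruence G \<theta> \<longleftrightarrow> equiv (free_frame G) \<theta> \<and>
     (\<forall>a b c. (a, b) \<in> \<theta> \<and> c \<in> free_frame G \<longrightarrow> (a \<inter> c, b \<inter> c) \<in> \<theta>) \<and>
     (\<forall>P. P \<subseteq> \<theta> \<longrightarrow> (\<Union>(fst ` P), \<Union>(snd ` P)) \<in> \<theta>)"

definition generated_congruence ::
    "'g set \<Rightarrow> ('g set set \<times> 'g set set) set \<Rightarrow> ('g set set \<times> 'g set set) set" where
  "generated_congruence G R = \<Inter>{\<theta>. frame_congruence G \<theta> \<and> R \<subseteq> \<theta>}"

definition is_presentation ::
    "'g set \<Rightarrow> ('g set set \<times> 'g set set) set \<Rightarrow> ('g set set \<Rightarrow> 'a::complete_lattice) \<Rightarrow> bool" where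
  "is_presentation G R q \<longleftrightarrow>
     R \<subseteq> free_frame G \<times> free_frame G \<and>
     free_frame_hom G q \<and> q ` free_frame G = UNIV \<and>
     {(a, b). a \<in> free_frame G \<and> b \<in> free_frame G \<and> q a = q b} = generated_congruence G R"

end

theory Submission
  imports Defs
begin

text \<open>Only two properties of the quotient map are used: it preserves arbitrary joins,
  and it is onto. Monotonicity follows from join preservation, so images of directed
  sets are directed and the Scott condition transfers forwards. Surjectivity lifts every
  directed set downstairs to a directed set upstairs: the preimage of a directed set is
  itself directed, because the join of a finite subfamily with a preimage of an upper
  bound stays in the preimage.\<close>

lemma is_lub_on_UNIV_iff:
  fixes s :: "'a::complete_lattice"
  shows "is_lub_on UNIV (\<le>) D s \<longleftrightarrow> s = Sup D"
  unfolding is_lub_on_def by (auto intro: antisym Sup_least Sup_upper)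

lemma is_lub_on_Union_iff:
  assumes "\<And>S. S \<subseteq> C \<Longrightarrow> \<Union>S \<in> C" and "D \<subseteq> C"
  shows "is_lub_on C (\<subseteq>) D s \<longleftrightarrow> s = \<Union>D"
  using assms(1)[OF assms(2)] unfolding is_lub_on_def by blast

lemma scott_open_onD_up:
  "scott_open_on C le V \<Longrightarrow> x \<in> V \<Longrightarrow> y \<in> C \<Longrightarrow> le x y \<Longrightarrow> y \<in> V"
  unfolding scott_open_on_def by blast

lemma scott_open_onD_lub:
  "scott_open_on C le V \<Longrightarrow> directed_on C le D \<Longrightarrow> is_lub_on C le D s \<Longrightarrow> s \<in> V
    \<Longrightarrow> \<exists>d\<in>D. d \<in> V"
  unfolding scott_open_on_def by blast

lemma free_frame_Union_closed: "S \<subseteq> free_frame G \<Longrightarrow> \<Union>S \<in> free_frame G"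
  unfolding free_frame_def by blast

locale join_quotient =
  fixes C :: "'b set set" and q :: "'b set \<Rightarrow> 'a::complete_lattice"
  assumes Union_closed: "S \<subseteq> C \<Longrightarrow> \<Union>S \<in> C"
    and map_Union: "S \<subseteq> C \<Longrightarrow> q (\<Union>S) = Sup (q ` S)"
    and onto: "q ` C = UNIV"
begin

lemma map_Un: "a \<in> C \<Longrightarrow> b \<in> C \<Longrightarrow> q (a \<union> b) = sup (q a) (q b)"
  using map_Union[of "{a, b}"] by simp

lemma Un_closed: "a \<in> C \<Longrightarrow> b \<in> C \<Longrightarrow> a \<union> b \<in> C"
  using Union_closed[of "{a, b}"] by simp

lemma mono: "a \<in> C \<Longrightarrow> b \<in> C \<Longrightarrow> a \<subseteq> b \<Longrightarrow> q a \<le> q b"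
  using map_Un[of a b] by (simp add: subset_Un_eq le_iff_sup)

lemma obtain_preimage:
  obtains a where "a \<in> C" "q a = x"
  using onto by (metis UNIV_I image_iff)

lemma image_preimage: "q ` (C \<inter> q -` D) = D"
proof
  show "D \<subseteq> q ` (C \<inter> q -` D)"
  proof
    fix x assume "x \<in> D"
    obtain a where "a \<in> C" "q a = x" by (rule obtain_preimage)
    with \<open>x \<in> D\<close> show "x \<in> q ` (C \<inter> q -` D)" by force
  qed
qed auto

lemma directed_on_image:
  assumes "directed_on C (\<subseteq>) D"
  shows "directed_on UNIV (\<le>) (q ` D)"
  unfolding directed_on_def
proof (intro conjI allI impI)
  fix F assume F: "finite F \<and> F \<subseteq> q ` D"
  then obtain F' where F': "F' \<subseteq> D" "F = q ` F'" "finite F'"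
    by (meson finite_subset_image)
  with assms obtain d where d: "d \<in> D" "\<forall>x\<in>F'. x \<subseteq> d"
    unfolding directed_on_def by blast
  have "D \<subseteq> C" using assms unfolding directed_on_def by blast
  with F' d have "\<forall>x\<in>F'. q x \<le> q d" by (blast intro: mono)
  with F'(2) have "\<forall>x\<in>F. x \<le> q d" by blast
  with d show "\<exists>e\<in>q ` D. \<forall>x\<in>F. x \<le> e" by blast
qed simp

lemma directed_on_preimage:
  assumes "directed_on UNIV (\<le>) D"
  shows "directed_on C (\<subseteq>) (C \<inter> q -` D)"
  unfolding directed_on_def
proof (intro conjI allI impI)
  fix F assume F: "finite F \<and> F \<subseteq> C \<inter> q -` D"
  with assms obtain d where d: "d \<in> D" "\<forall>x\<in>q ` F. x \<le> d"
    unfolding directed_on_def by (metis finite_imageI image_subset_iff_subset_vimage le_infE)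
  obtain a where a: "a \<in> C" "q a = d" by (rule obtain_preimage)
  have FC: "\<Union>F \<in> C" using F by (intro Union_closed) blast
  have "q (\<Union>F) \<le> d"
    using F d by (simp add: map_Union Sup_le_iff)
  then have "q (a \<union> \<Union>F) = d"
    using map_Un[OF a(1) FC] a by (simp add: sup.absorb1)
  with a FC d have "a \<union> \<Union>F \<in> C \<inter> q -` D" by (simp add: Un_closed)
  moreover have "\<forall>x\<in>F. x \<subseteq> a \<union> \<Union>F" by blast
  ultimately show "\<exists>e\<in>C \<inter> q -` D. \<forall>x\<in>F. x \<subseteq> e" by (rule bexI[rotated])
qed (rule Int_lower1)

lemma scott_open_preimage:
  assumes U: "scott_open_on UNIV (\<le>) U"
  shows "scott_open_on C (\<subseteq>) (C \<inter> q -` U)"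
  unfolding scott_open_on_def
proof (intro conjI allI impI ballI)
  fix x y assume "x \<in> C \<inter> q -` U" "y \<in> C" "x \<subseteq> y"
  then have "q y \<in> U"
    using scott_open_onD_up[OF U, of "q x" "q y"] mono[of x y] by blast
  with \<open>y \<in> C\<close> show "y \<in> C \<inter> q -` U" by blast
next
  fix D s assume D: "directed_on C (\<subseteq>) D \<and> is_lub_on C (\<subseteq>) D s \<and> s \<in> C \<inter> q -` U"
  have "D \<subseteq> C" using D unfolding directed_on_def by blast
  then have "q s = Sup (q ` D)"
    using D by (simp add: is_lub_on_Union_iff[OF Union_closed] map_Union)
  then have "is_lub_on UNIV (\<le>) (q ` D) (q s)"
    by (simp add: is_lub_on_UNIV_iff)
  moreover have "directed_on UNIV (\<le>) (q ` D)"
    using D by (simp add: directed_on_image)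
  ultimately obtain d where "d \<in> D" "q d \<in> U"
    using scott_open_onD_lub[OF U] D by blast
  with \<open>D \<subseteq> C\<close> show "\<exists>d\<in>D. d \<in> C \<inter> q -` U" by blast
qed (rule Int_lower1)

lemma scott_open_of_preimage:
  assumes V: "scott_open_on C (\<subseteq>) (C \<inter> q -` U)"
  shows "scott_open_on UNIV (\<le>) U"
  unfolding scott_open_on_def
proof (intro conjI allI impI ballI)
  fix x y :: 'a assume "x \<in> U" "x \<le> y"
  obtain a where a: "a \<in> C" "q a = x" by (rule obtain_preimage)
  obtain b where b: "b \<in> C" "q b = y" by (rule obtain_preimage)
  have ab: "a \<union> b \<in> C" using a(1) b(1) by (rule Un_closed)
  have "q (a \<union> b) = y"
    using map_Un[OF a(1) b(1)] a b \<open>x \<le> y\<close> by (simp add: sup.absorb2)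
  moreover have "a \<union> b \<in> C \<inter> q -` U"
    using scott_open_onD_up[OF V, of a "a \<union> b"] a \<open>x \<in> U\<close> ab by blast
  ultimately show "y \<in> U" by blast
next
  fix D s assume D: "directed_on UNIV (\<le>) D \<and> is_lub_on UNIV (\<le>) D s \<and> s \<in> U"
  let ?D' = "C \<inter> q -` D"
  have "s = q (\<Union>?D')"
    using D by (simp add: is_lub_on_UNIV_iff map_Union image_preimage)
  with D have "\<Union>?D' \<in> C \<inter> q -` U" by (simp add: Union_closed)
  moreover have "directed_on C (\<subseteq>) ?D'"
    using D by (simp add: directed_on_preimage)
  moreover have "is_lub_on C (\<subseteq>) ?D' (\<Union>?D')"
    by (simp add: is_lub_on_Union_iff[OF Union_closed])
  ultimately obtain a where "a \<in> ?D'" "a \<in> C \<inter> q -` U"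
    using scott_open_onD_lub[OF V] by blast
  then show "\<exists>d\<in>D. d \<in> U" by blast
qed simp

theorem scott_open_iff_preimage:
  "scott_open_on UNIV (\<le>) U \<longleftrightarrow> scott_open_on C (\<subseteq>) (C \<inter> q -` U)"
  using scott_open_preimage scott_open_of_preimage by blast

end

lemma presentation_join_quotient:
  assumes "is_presentation G R q"
  shows "join_quotient (free_frame G) q"
  using assms free_frame_Union_closed
  unfolding is_presentation_def free_frame_hom_def join_quotient_def by blast

theorem mainTheorem3:
  fixes G :: "'g set"
    and R :: "('g set set \<times> 'g set set) set"
    and q :: "'g set set \<Rightarrow> 'a::complete_lattice"
  assumes "is_frame TYPE('a)"
    and "is_presentation G R q"
  shows "\<forall>U :: 'a set. scott_open_on UNIV (\<le>) U \<longleftrightarrow>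
           scott_open_on (free_frame G) (\<subseteq>) (free_frame G \<inter> q -` U)"
  using join_quotient.scott_open_iff_preimage[OF presentation_join_quotient[OF assms(2)]]
  by blast

end
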